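(* Let $d\ge1$ and $q\ge2$ even, and define the polynomials $P^B_{d,q}(x)=\frac{\Gamma(\frac{d+q}{2})}{\pi^{d/2}\Gamma(\frac q2)}P^{(\frac d2,-2)}_{\frac q2+1}(1-2x^2)$ and $R^B_{d,q}(x)=(d-1)\frac{P^{B(1)}_{d,q}(x)}{x}+P^{B(2)}_{d,q}(x)$. Then $P^B_{d,q}$ can be written as $P^B_{d,q}(x)=a_0(x^2-a_1^2)\cdots(x^2-a_{q/2+1}^2)$ with $a_0>0$ when $q\in\{2,6,10,\ldots\}$, $a_0<0$ when $q\in\{4,8,\ldots\}$, and $0<a_1<\cdots<a_{q/2}=a_{q/2+1}=1$. Moreover, for $j=0,\ldots,q-2$, $R^B_{d,q}(x)/x^j$ is monotonically increasing and positive for $x>1$ when $q\in\{2,6,\ldots\}$, and monotonically decreasing and negative for $x>1$ when $q\in\{4,8,\ldots\}$.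
   Context: $P^{(\alpha,\beta)}_n$ is the Jacobi polynomial $P_n^{(\alpha,\beta)}(x)=\frac{(-1)^n}{2^nn!}(1-x)^{-\alpha}(1+x)^{-\beta}\frac{d^n}{dx^n}[(1-x)^{n+\alpha}(1+x)^{n+\beta}]$. $P^{B(l)}_{d,q}$ denotes the $l$-th derivative. *)

theory Defs
  imports "HOL-Analysis.Analysis"
begin

text \<open>Jacobi polynomial P_n^(alpha,beta)(x), given by the explicit finite-sum
  expansion of the Rodrigues formula (valid for all real parameters, as a polynomial
  identity in x).\<close>
definition jacobiP :: "nat \<Rightarrow> real \<Rightarrow> real \<Rightarrow> real \<Rightarrow> real" where
  "jacobiP n \<alpha> \<beta> x =
     (\<Sum>s\<le>n. ((real n + \<alpha>) gchoose (n - s)) * ((real n + \<beta>) gchoose s)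
              * ((x - 1) / 2) ^ s * ((x + 1) / 2) ^ (n - s))"

definition PB :: "nat \<Rightarrow> nat \<Rightarrow> real \<Rightarrow> real" where
  "PB d q x = Gamma ((real d + real q) / 2) / (pi powr (real d / 2) * Gamma (real q / 2))
              * jacobiP (q div 2 + 1) (real d / 2) (-2) (1 - 2 * x\<^sup>2)"

definition RB :: "nat \<Rightarrow> nat \<Rightarrow> real \<Rightarrow> real" where
  "RB d q x = (real d - 1) * deriv (PB d q) x / x + (deriv ^^ 2) (PB d q) x"

end

theory Submission
  imports Defs "HOL-Computational_Algebra.Polynomial"
begin

text \<open>
  Put \<open>u = x\<^sup>2\<close>, \<open>m = q/2 - 1\<close> and \<open>\<alpha> = d/2\<close>. By the Rodrigues formula, \<open>P\<^sup>B\<close> is a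
  positive multiple of \<open>(1 - u)\<^sup>2 p(u)\<close>, where \<open>u\<^bsup>\<alpha>\<^esup> (1 - u)\<^sup>2 p(u)\<close> is a multiple of the
  \<open>m\<close>-th derivative of \<open>u\<^bsup>m+\<alpha>\<^esup> (1 - u)\<^bsup>m+2\<^esup>\<close>; iterating Rolle's theorem puts the \<open>m\<close>
  zeros of \<open>p\<close> in \<open>(0,1)\<close>, and the sign of the leading coefficient is read off
  from \<open>P\<^sup>B(0) > 0\<close>.
  Writing \<open>P\<^sup>B(x) = F(x\<^sup>2)\<close>, one has \<open>R\<^sup>B(x) = 4 (\<alpha> F' + u F'')(x\<^sup>2)\<close> and
  \<open>(u\<^bsup>\<alpha>\<^esup> F')' = u\<^bsup>\<alpha>-1\<^esup> (\<alpha> F' + u F'')\<close>. The zeros of \<open>F'\<close> interlace those of \<open>F\<close>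
  and include the double zero \<open>1\<close>, so Rolle's theorem for \<open>u\<^bsup>\<alpha>\<^esup> F'\<close> on \<open>0\<close> and these
  zeros gives all \<open>m + 1\<close> zeros \<open>\<tau>\<^sub>i\<close> of \<open>\<alpha> F' + u F''\<close> in \<open>(0,1)\<close>. For \<open>x > 1\<close> and
  \<open>j \<le> 2(m + 1)\<close>, \<open>\<Prod>(x\<^sup>2 - \<tau>\<^sub>i) / x\<^bsup>j\<^esup> = x\<^bsup>2(m+1)-j\<^esup> \<Prod>(1 - \<tau>\<^sub>i / x\<^sup>2)\<close> is positive and
  increasing.
\<close>

section \<open>Interlacing zeros and factorization by roots\<close>

lemma Rolle_interlacing:
  fixes f f' :: "real \<Rightarrow> real" and w :: "nat \<Rightarrow> real"
  assumes incr: "\<And>i. i < n \<Longrightarrow> w i < w (Suc i)"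
    and zero: "\<And>i. i \<le> n \<Longrightarrow> f (w i) = 0"
    and range: "\<And>i. i \<le> n \<Longrightarrow> w i \<in> {a..b}"
    and cont: "continuous_on {a..b} f"
    and deriv: "\<And>x. x \<in> {a<..<b} \<Longrightarrow> (f has_real_derivative f' x) (at x)"
  obtains y where "\<And>i. i < n \<Longrightarrow> w i < y i \<and> y i < w (Suc i) \<and> f' (y i) = 0"
proof -
  have "\<exists>y. w i < y \<and> y < w (Suc i) \<and> f' y = 0" if i: "i < n" for i
  proof -
    have sub: "{w i..w (Suc i)} \<subseteq> {a..b}" using range[of i] range[of "Suc i"] i by auto
    have "continuous_on {w i..w (Suc i)} f" using continuous_on_subset[OF cont sub] .
    moreover have "f differentiable (at x)" if "w i < x" "x < w (Suc i)" for x
      using deriv[of x] sub that real_differentiable_def by fastforce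
    ultimately obtain y where y: "w i < y" "y < w (Suc i)" "DERIV f y :> 0"
      using Rolle[of "w i" "w (Suc i)" f] incr[OF i] zero[of i] zero[of "Suc i"] i by auto
    then have "DERIV f y :> f' y" using deriv[of y] sub by auto
    with y show ?thesis using DERIV_unique by blast
  qed
  then show ?thesis using that by metis
qed

lemma strict_mono_on_lessThanI:
  fixes r :: "nat \<Rightarrow> 'a::order"
  assumes "\<And>i. Suc i < n \<Longrightarrow> r i < r (Suc i)"
  shows "strict_mono_on {..<n} r"
  by (rule strict_mono_onI, rule lift_Suc_mono_less_ivl[of "{..<n - 1}"]) (use assms in auto)

lemma poly_eq_coeff_prod_roots:
  fixes p :: "'a::idom poly"
  assumes "degree p \<le> n" "\<And>i. i < n \<Longrightarrow> poly p (r i) = 0" "inj_on r {..<n}"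
  shows "poly p x = coeff p n * (\<Prod>i<n. x - r i)"
  using assms
proof (induction n arbitrary: p)
  case 0
  then show ?case by (auto elim: degree_eq_zeroE)
next
  case (Suc n)
  have "[:- r n, 1:] dvd p" using Suc.prems(2)[of n] poly_eq_0_iff_dvd by blast
  then obtain s where s: "p = [:- r n, 1:] * s" by (elim dvdE)
  have "degree s \<le> n"
    using Suc.prems(1) unfolding s by (cases "s = 0") (simp_all add: degree_mult_eq del: mult_pCons_left)
  moreover have "poly s (r i) = 0" if "i < n" for i
    using Suc.prems(2)[of i] inj_onD[OF Suc.prems(3), of i n] that unfolding s by auto
  moreover have "inj_on r {..<n}" using Suc.prems(3) by (auto intro: inj_on_subset)
  ultimately have "poly s x = coeff s n * (\<Prod>i<n. x - r i)" by (rule Suc.IH)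
  moreover have "coeff p (Suc n) = coeff s n"
    using \<open>degree s \<le> n\<close> unfolding s by (simp add: coeff_eq_0)
  moreover have "poly p x = (x - r n) * poly s x" unfolding s by (simp add: algebra_simps)
  ultimately show ?case by (simp add: algebra_simps)
qed

lemma monic_linear_prod:
  fixes r :: "nat \<Rightarrow> 'a::idom"
  shows "degree (\<Prod>i<n. [:- r i, 1:]) = n" "coeff (\<Prod>i<n. [:- r i, 1:]) n = 1"
proof -
  show deg: "degree (\<Prod>i<n. [:- r i, 1:]) = n"
    by (subst degree_prod_eq_sum_degree) auto
  show "coeff (\<Prod>i<n. [:- r i, 1:]) n = 1"
    using lead_coeff_prod[of "\<lambda>i. [:- r i, 1:]" "{..<n}"] by (simp add: deg)
qed

section \<open>Rodrigues derivatives\<close>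

text \<open>\<open>rodrigues A M k\<close> is \<open>(1/k!) (d/du)\<^bsup>k\<^esup> (u\<^bsup>A\<^esup> (1 - u)\<^bsup>M\<^esup>)\<close> expanded by the Leibniz
  rule; for \<open>0 < u\<close> it equals \<open>u\<^bsup>A-k\<^esup> (1 - u)\<^bsup>M-k\<^esup>\<close> times \<open>rodrigues_poly A M k\<close>.\<close>

definition rodrigues_coeff :: "real \<Rightarrow> nat \<Rightarrow> nat \<Rightarrow> nat \<Rightarrow> real" where
  "rodrigues_coeff A M k s = (-1) ^ s * (A gchoose (k - s)) * real (M choose s)"

definition rodrigues :: "real \<Rightarrow> nat \<Rightarrow> nat \<Rightarrow> real \<Rightarrow> real" where
  "rodrigues A M k u =
     (\<Sum>s\<le>k. rodrigues_coeff A M k s * u powr (A - real k + real s) * (1 - u) ^ (M - s))"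

definition rodrigues_poly :: "real \<Rightarrow> nat \<Rightarrow> nat \<Rightarrow> real poly" where
  "rodrigues_poly A M k =
     (\<Sum>s\<le>k. smult (rodrigues_coeff A M k s) ([:0, 1:] ^ s * [:1, -1:] ^ (k - s)))"

lemma rodrigues_coeff_Suc:
  assumes "s \<le> k"
  shows "(A - real k + real s) * rodrigues_coeff A M k s = real (Suc k - s) * rodrigues_coeff A M (Suc k) s"
proof -
  have idx: "Suc k - s = Suc (k - s)" "A - real k + real s = A - real (k - s)"
    using assms by (simp_all add: of_nat_diff)
  have absorb: "(A - real (k - s)) * (A gchoose (k - s)) = real (Suc (k - s)) * (A gchoose Suc (k - s))"
    using gbinomial_mult_1[of A "k - s"] by (simp add: algebra_simps)
  have "(A - real k + real s) * rodrigues_coeff A M k s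
      = (-1) ^ s * real (M choose s) * ((A - real (k - s)) * (A gchoose (k - s)))"
    unfolding rodrigues_coeff_def idx by (simp only: mult_ac)
  also have "\<dots> = real (Suc k - s) * rodrigues_coeff A M (Suc k) s"
    unfolding rodrigues_coeff_def idx absorb by (simp only: mult_ac)
  finally show ?thesis .
qed

lemma rodrigues_coeff_Suc_Suc:
  "real (M - s) * rodrigues_coeff A M k s = - (real (Suc s) * rodrigues_coeff A M (Suc k) (Suc s))"
proof -
  have "(M - s) * (M choose s) = Suc s * (M choose Suc s)"
    by (simp only: binomial_absorb_comp binomial_absorption)
  then have absorb: "real (M - s) * real (M choose s) = real (Suc s) * real (M choose Suc s)"
    by (simp only: of_nat_mult[symmetric])
  have "real (M - s) * rodrigues_coeff A M k s
      = (-1) ^ s * (A gchoose (k - s)) * (real (M - s) * real (M choose s))"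
    unfolding rodrigues_coeff_def by (simp only: mult_ac)
  also have "\<dots> = - (real (Suc s) * rodrigues_coeff A M (Suc k) (Suc s))"
    unfolding rodrigues_coeff_def absorb by simp
  finally show ?thesis .
qed

lemma rodrigues_has_derivative:
  assumes "0 < u"
  shows "(rodrigues A M k has_real_derivative real (Suc k) * rodrigues A M (Suc k) u) (at u)"
proof -
  define c where "c = rodrigues_coeff A M k"
  define c' where "c' = rodrigues_coeff A M (Suc k)"
  define T where "T s = u powr (A - real (Suc k) + real s) * (1 - u) ^ (M - s)" for s
  have term_deriv: "((\<lambda>u. u powr (A - real k + real s) * (1 - u) ^ (M - s)) has_real_derivative
      (A - real k + real s) * T s - real (M - s) * T (Suc s)) (at u)" for s
  proof -
    have "((\<lambda>u. u powr (A - real k + real s)) has_real_derivative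
        (A - real k + real s) * u powr (A - real k + real s - 1)) (at u)"
      using assms by (intro has_real_derivative_powr) auto
    moreover have "((\<lambda>u. (1 - u) ^ (M - s)) has_real_derivative - (real (M - s) * (1 - u) ^ (M - Suc s))) (at u)"
      by (auto intro!: derivative_eq_intros)
    ultimately have "((\<lambda>u. u powr (A - real k + real s) * (1 - u) ^ (M - s)) has_real_derivative
        (A - real k + real s) * u powr (A - real k + real s - 1) * (1 - u) ^ (M - s)
        - real (M - s) * (1 - u) ^ (M - Suc s) * u powr (A - real k + real s)) (at u)"
      by (rule DERIV_mult[THEN DERIV_cong]) simp
    moreover have "A - real k + real s - 1 = A - real (Suc k) + real s"
      "A - real k + real s = A - real (Suc k) + real (Suc s)" by simp_all
    ultimately show ?thesis unfolding T_def by (simp only: mult_ac)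
  qed
  have "(rodrigues A M k has_real_derivative
      (\<Sum>s\<le>k. c s * ((A - real k + real s) * T s - real (M - s) * T (Suc s)))) (at u)"
    unfolding rodrigues_def[abs_def] mult.assoc c_def by (intro DERIV_sum DERIV_cmult term_deriv)
  also have "(\<Sum>s\<le>k. c s * ((A - real k + real s) * T s - real (M - s) * T (Suc s)))
      = (\<Sum>s\<le>Suc k. real (Suc k - s) * c' s * T s) + (\<Sum>s\<le>Suc k. real s * c' s * T s)"
  proof -
    have "(\<Sum>s\<le>k. (A - real k + real s) * c s * T s) = (\<Sum>s\<le>k. real (Suc k - s) * c' s * T s)"
      by (intro sum.cong) (simp_all add: c_def c'_def rodrigues_coeff_Suc)
    then have "(\<Sum>s\<le>k. (A - real k + real s) * c s * T s) = (\<Sum>s\<le>Suc k. real (Suc k - s) * c' s * T s)"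
      by simp
    moreover have "(\<Sum>s\<le>k. real (M - s) * c s * T (Suc s)) = - (\<Sum>s\<le>Suc k. real s * c' s * T s)"
      unfolding c_def c'_def sum.atMost_Suc_shift
      by (simp add: rodrigues_coeff_Suc_Suc sum_negf del: of_nat_Suc)
    moreover have "(\<Sum>s\<le>k. c s * ((A - real k + real s) * T s - real (M - s) * T (Suc s)))
        = (\<Sum>s\<le>k. (A - real k + real s) * c s * T s) - (\<Sum>s\<le>k. real (M - s) * c s * T (Suc s))"
      by (simp add: sum_subtractf[symmetric] algebra_simps)
    ultimately show ?thesis by simp
  qed
  also have "\<dots> = (\<Sum>s\<le>Suc k. real (Suc k) * (c' s * T s))"
    unfolding sum.distrib[symmetric] by (intro sum.cong) (auto simp: algebra_simps of_nat_diff)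
  also have "\<dots> = real (Suc k) * rodrigues A M (Suc k) u"
    unfolding rodrigues_def c'_def T_def sum_distrib_left by (simp add: mult.assoc)
  finally show ?thesis .
qed

lemma rodrigues_eq_poly:
  assumes "k \<le> M" "0 < u"
  shows "rodrigues A M k u = u powr (A - real k) * (1 - u) ^ (M - k) * poly (rodrigues_poly A M k) u"
proof -
  have "u powr (A - real k + real s) * (1 - u) ^ (M - s)
      = u powr (A - real k) * (1 - u) ^ (M - k) * (u ^ s * (1 - u) ^ (k - s))" if "s \<le> k" for s
  proof -
    have "u powr (A - real k + real s) = u powr (A - real k) * u ^ s"
      using assms by (simp add: powr_add powr_realpow)
    moreover have "(1 - u) ^ (M - s) = (1 - u) ^ (M - k) * (1 - u) ^ (k - s)"
      using that assms by (simp add: power_add[symmetric])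
    ultimately show ?thesis by simp
  qed
  then show ?thesis
    unfolding rodrigues_def rodrigues_poly_def by (simp add: poly_sum sum_distrib_left algebra_simps)
qed

text \<open>This holds because \<open>0 powr a = 0\<close>; it is the genuine limit value only for \<open>k < A\<close>.\<close>

lemma rodrigues_at_0: "rodrigues A M k 0 = 0"
  by (simp add: rodrigues_def)

lemma rodrigues_at_1: "k < M \<Longrightarrow> rodrigues A M k 1 = 0"
  by (auto simp: rodrigues_def intro!: sum.neutral)

lemma continuous_on_rodrigues: "real k < A \<Longrightarrow> continuous_on {0..1} (rodrigues A M k)"
  unfolding rodrigues_def[abs_def] by (intro continuous_intros continuous_on_powr') auto

lemma degree_rodrigues_poly: "degree (rodrigues_poly A M k) \<le> k"
  unfolding rodrigues_poly_def
proof (intro degree_sum_le)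
  fix s assume "s \<in> {..k}"
  have "degree ([:0, 1:] ^ s * [:1, -1:] ^ (k - s) :: real poly) \<le> s + (k - s)"
    by (intro order.trans[OF degree_mult_le] add_mono order.trans[OF degree_power_le]) auto
  then show "degree (smult (rodrigues_coeff A M k s) ([:0, 1:] ^ s * [:1, -1:] ^ (k - s))) \<le> k"
    using \<open>s \<in> {..k}\<close> by (simp add: order.trans[OF degree_smult_le])
qed simp

lemma rodrigues_poly_roots:
  assumes "k \<le> M" "real k < A + 1"
  shows "\<exists>z. (\<forall>i<k. 0 < z i \<and> z i < 1 \<and> poly (rodrigues_poly A M k) (z i) = 0)
           \<and> (\<forall>i. Suc i < k \<longrightarrow> z i < z (Suc i))"
  using assms
proof (induction k)
  case 0
  then show ?case by auto
next
  case (Suc k)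
  then obtain z where z_roots: "\<forall>i<k. 0 < z i \<and> z i < 1 \<and> poly (rodrigues_poly A M k) (z i) = 0"
    and z_incr: "\<forall>i. Suc i < k \<longrightarrow> z i < z (Suc i)"
    by auto
  have "k < M" "real k < A" using Suc.prems by auto
  define w where "w i = (if i = 0 then 0 else if i \<le> k then z (i - 1) else 1)" for i
  have w_range: "w i \<in> {0..1}" for i
    using z_roots by (auto simp: w_def less_imp_le)
  have w_incr: "w i < w (Suc i)" if "i < Suc k" for i
    using that z_roots z_incr[rule_format, of "i - 1"] by (auto simp: w_def)
  have w_zero: "rodrigues A M k (w i) = 0" if i: "i \<le> Suc k" for i
  proof -
    consider "i = 0" | "0 < i" "i \<le> k" | "i = Suc k" using i by fastforce
    then show ?thesis
    proof cases
      case 2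
      then have "0 < z (i - 1)" "poly (rodrigues_poly A M k) (z (i - 1)) = 0" using z_roots by auto
      then show ?thesis using 2 \<open>k < M\<close> by (simp add: w_def rodrigues_eq_poly)
    qed (use \<open>k < M\<close> in \<open>simp_all add: w_def rodrigues_at_0 rodrigues_at_1\<close>)
  qed
  obtain y where y: "\<And>i. i < Suc k \<Longrightarrow>
      w i < y i \<and> y i < w (Suc i) \<and> real (Suc k) * rodrigues A M (Suc k) (y i) = 0"
  proof (rule Rolle_interlacing[where n = "Suc k" and w = w and f = "rodrigues A M k" and a = 0 and b = 1])
    show "continuous_on {0..1} (rodrigues A M k)"
      using \<open>real k < A\<close> by (rule continuous_on_rodrigues)
    show "(rodrigues A M k has_real_derivative real (Suc k) * rodrigues A M (Suc k) x) (at x)"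
      if "x \<in> {0<..<1}" for x
      using that by (simp add: rodrigues_has_derivative del: of_nat_Suc)
  qed (use that w_incr w_zero w_range in auto)
  have "0 < y i \<and> y i < 1 \<and> poly (rodrigues_poly A M (Suc k)) (y i) = 0" if "i < Suc k" for i
  proof -
    have "0 < y i" "y i < 1" using y[OF that] w_range[of i] w_range[of "Suc i"] by auto
    moreover have "rodrigues A M (Suc k) (y i) = 0" using y[OF that] by simp
    ultimately show ?thesis using Suc.prems by (simp add: rodrigues_eq_poly)
  qed
  moreover have "y i < y (Suc i)" if "Suc i < Suc k" for i
    using y[of i] y[of "Suc i"] that by force
  ultimately show ?case by blast
qed

section \<open>The polynomial \<open>P\<^sup>B\<close>\<close>

lemma jacobiP_at_1: "jacobiP n \<alpha> \<beta> 1 = (real n + \<alpha>) gchoose n"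
  unfolding jacobiP_def by (cases n) (simp_all add: sum.atMost_Suc_shift)

lemma jacobiP_beta_minus_2:
  "jacobiP (m + 2) \<alpha> (-2) (1 - 2 * u) = (1 - u)\<^sup>2 *
     (\<Sum>s\<le>m. (-1) ^ s * ((real m + \<alpha> + 2) gchoose (m + 2 - s)) * real (m choose s) * u ^ s * (1 - u) ^ (m - s))"
proof -
  have args: "(1 - 2 * u - 1) / 2 = - u" "(1 - 2 * u + 1) / 2 = 1 - u"
    "real (m + 2) + -2 = real m" "real (m + 2) + \<alpha> = real m + \<alpha> + 2"
    by simp_all
  have "jacobiP (m + 2) \<alpha> (-2) (1 - 2 * u) =
      (\<Sum>s\<le>m + 2. ((real m + \<alpha> + 2) gchoose (m + 2 - s)) * real (m choose s) * (- u) ^ s * (1 - u) ^ (m + 2 - s))"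
    unfolding jacobiP_def args by (simp only: binomial_gbinomial)
  also have "\<dots> = (\<Sum>s\<le>m. ((real m + \<alpha> + 2) gchoose (m + 2 - s)) * real (m choose s) * (- u) ^ s * (1 - u) ^ (m + 2 - s))"
    by (simp add: binomial_eq_0)
  also have "\<dots> = (1 - u)\<^sup>2 *
     (\<Sum>s\<le>m. (-1) ^ s * ((real m + \<alpha> + 2) gchoose (m + 2 - s)) * real (m choose s) * u ^ s * (1 - u) ^ (m - s))"
    unfolding sum_distrib_left
  proof (intro sum.cong refl)
    fix s assume "s \<in> {..m}"
    then have "m + 2 - s = 2 + (m - s)" by simp
    then have "(1 - u) ^ (m + 2 - s) = (1 - u)\<^sup>2 * (1 - u) ^ (m - s)"
      by (simp only: power_add)
    then show "((real m + \<alpha> + 2) gchoose (m + 2 - s)) * real (m choose s) * (- u) ^ s * (1 - u) ^ (m + 2 - s)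
      = (1 - u)\<^sup>2 * ((-1) ^ s * ((real m + \<alpha> + 2) gchoose (m + 2 - s)) * real (m choose s) * u ^ s * (1 - u) ^ (m - s))"
      by (simp add: power_minus')
  qed
  finally show ?thesis .
qed

lemma gbinomial_absorption_twice:
  "real (j + 2) * real (j + 1) * ((a + 2) gchoose (j + 2)) = (a + 2) * (a + 1) * (a gchoose j)"
proof -
  have "real (j + 2) * ((a + 2) gchoose (j + 2)) = (a + 2) * ((a + 1) gchoose (j + 1))"
    using gbinomial_absorption[of "Suc j" "a + 2"] by (simp add: add_diff_eq[symmetric] del: of_nat_Suc)
  moreover have "real (j + 1) * ((a + 1) gchoose (j + 1)) = (a + 1) * (a gchoose j)"
    using gbinomial_absorption[of j "a + 1"] by (simp del: of_nat_Suc)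
  ultimately show ?thesis by (metis mult.assoc mult.left_commute)
qed

lemma binomial_absorb_comp_twice:
  "(n + 2 - k) * (n + 1 - k) * ((n + 2) choose k) = (n + 2) * (n + 1) * (n choose k)"
proof -
  have "(n + 2 - k) * ((n + 2) choose k) = (n + 2) * ((n + 1) choose k)"
    using binomial_absorb_comp[of "n + 2" k] by simp
  moreover have "(n + 1 - k) * ((n + 1) choose k) = (n + 1) * (n choose k)"
    using binomial_absorb_comp[of "n + 1" k] by simp
  ultimately show ?thesis by (metis mult.assoc mult.commute)
qed

lemma rodrigues_coeff_jacobi:
  assumes "s \<le> m"
  shows "(A + 1) * (A + 2) * rodrigues_coeff A (m + 2) m s
    = (real m + 1) * (real m + 2) * ((-1) ^ s * ((A + 2) gchoose (m + 2 - s)) * real (m choose s))"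
proof -
  define j where "j = m - s"
  have idx: "m + 2 - s = j + 2" "m + 1 - s = j + 1" "m - s = j"
    using assms by (simp_all add: j_def)
  define P where "P = real (j + 2) * real (j + 1)"
  have "P \<noteq> 0" by (simp add: P_def)
  have "real ((m + 2 - s) * (m + 1 - s) * ((m + 2) choose s)) = real ((m + 2) * (m + 1) * (m choose s))"
    by (simp only: binomial_absorb_comp_twice)
  then have absorb_m: "P * real ((m + 2) choose s) = (real m + 2) * (real m + 1) * real (m choose s)"
    unfolding P_def idx of_nat_mult by (simp add: algebra_simps)
  have "P * ((A + 1) * (A + 2) * rodrigues_coeff A (m + 2) m s)
      = (-1) ^ s * (A + 1) * (A + 2) * (A gchoose j) * (P * real ((m + 2) choose s))"
    unfolding rodrigues_coeff_def idx by (simp only: ac_simps)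
  also have "\<dots> = (-1) ^ s * (real m + 1) * (real m + 2) * real (m choose s) * ((A + 2) * (A + 1) * (A gchoose j))"
    unfolding absorb_m by (simp only: ac_simps)
  also have "\<dots> = P * ((real m + 1) * (real m + 2) * ((-1) ^ s * ((A + 2) gchoose (m + 2 - s)) * real (m choose s)))"
    unfolding gbinomial_absorption_twice[symmetric] P_def idx by (simp only: ac_simps)
  finally show ?thesis using \<open>P \<noteq> 0\<close> by simp
qed

lemma jacobiP_eq_rodrigues_poly:
  "(real m + 1) * (real m + 2) * jacobiP (m + 2) \<alpha> (-2) (1 - 2 * u)
    = (real m + \<alpha> + 1) * (real m + \<alpha> + 2) * (1 - u)\<^sup>2 * poly (rodrigues_poly (real m + \<alpha>) (m + 2) m) u"
proof -
  let ?A = "real m + \<alpha>"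
  let ?S = "\<Sum>s\<le>m. (-1) ^ s * ((real m + \<alpha> + 2) gchoose (m + 2 - s)) * real (m choose s) * u ^ s * (1 - u) ^ (m - s)"
  have "(?A + 1) * (?A + 2) * poly (rodrigues_poly ?A (m + 2) m) u
      = (\<Sum>s\<le>m. (?A + 1) * (?A + 2) * rodrigues_coeff ?A (m + 2) m s * (u ^ s * (1 - u) ^ (m - s)))"
    unfolding rodrigues_poly_def by (simp add: poly_sum sum_distrib_left mult.assoc)
  also have "\<dots> = (real m + 1) * (real m + 2) * ?S"
    unfolding sum_distrib_left
  proof (intro sum.cong refl)
    fix s assume "s \<in> {..m}"
    then have "s \<le> m" by simp
    then show "(?A + 1) * (?A + 2) * rodrigues_coeff ?A (m + 2) m s * (u ^ s * (1 - u) ^ (m - s))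
      = (real m + 1) * (real m + 2) *
        ((-1) ^ s * ((real m + \<alpha> + 2) gchoose (m + 2 - s)) * real (m choose s) * u ^ s * (1 - u) ^ (m - s))"
      unfolding rodrigues_coeff_jacobi[OF \<open>s \<le> m\<close>] by (simp only: mult_ac)
  qed
  finally have rodrigues_sum: "(?A + 1) * (?A + 2) * poly (rodrigues_poly ?A (m + 2) m) u
    = (real m + 1) * (real m + 2) * ?S" .
  have "(real m + 1) * (real m + 2) * jacobiP (m + 2) \<alpha> (-2) (1 - 2 * u)
      = (1 - u)\<^sup>2 * ((real m + 1) * (real m + 2) * ?S)"
    unfolding jacobiP_beta_minus_2 by (simp only: mult_ac)
  also have "\<dots> = (?A + 1) * (?A + 2) * (1 - u)\<^sup>2 * poly (rodrigues_poly ?A (m + 2) m) u"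
    unfolding rodrigues_sum[symmetric] by (simp only: mult_ac)
  finally show ?thesis .
qed

lemma PB_normalization_pos:
  assumes "q \<ge> 1"
  shows "0 < Gamma ((real d + real q) / 2) / (pi powr (real d / 2) * Gamma (real q / 2))"
  using assms by (intro divide_pos_pos mult_pos_pos Gamma_real_pos) auto

lemma PB_at_0_pos:
  assumes "q \<ge> 1"
  shows "0 < PB d q 0"
proof -
  let ?n = "q div 2 + 1"
  have "0 < pochhammer (real d / 2 + 1) ?n" by (intro pochhammer_pos) simp
  then have "0 < (real ?n + real d / 2) gchoose ?n"
    unfolding gbinomial_pochhammer' by (simp add: add_ac)
  with PB_normalization_pos[OF assms] have "0 < Gamma ((real d + real q) / 2) / (pi powr (real d / 2) * Gamma (real q / 2))
      * ((real ?n + real d / 2) gchoose ?n)"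
    by (rule mult_pos_pos)
  then show ?thesis
    unfolding PB_def by (simp only: mult_1_right add_diff_cancel jacobiP_at_1 power_zero_numeral mult_zero_right diff_zero)
qed

lemma PB_eq_rodrigues_poly:
  assumes "q \<ge> 2"
  defines "m \<equiv> q div 2 - 1"
  obtains c where "0 < c"
    "\<And>x. PB d q x = c * (1 - x\<^sup>2)\<^sup>2 * poly (rodrigues_poly (real m + real d / 2) (m + 2) m) (x\<^sup>2)"
proof
  define K where "K = Gamma ((real d + real q) / 2) / (pi powr (real d / 2) * Gamma (real q / 2))"
  define A where "A = real m + real d / 2"
  have n: "q div 2 + 1 = m + 2" using assms(1) by (simp add: m_def)
  have "0 < K" unfolding K_def using assms(1) by (intro PB_normalization_pos) simp
  moreover have "0 < (A + 1) * (A + 2) / ((real m + 1) * (real m + 2))" by (simp add: A_def)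
  ultimately show "0 < K * ((A + 1) * (A + 2) / ((real m + 1) * (real m + 2)))" by (rule mult_pos_pos)
  fix x
  have "(real m + 1) * (real m + 2) * jacobiP (m + 2) (real d / 2) (-2) (1 - 2 * x\<^sup>2)
      = (A + 1) * (A + 2) * (1 - x\<^sup>2)\<^sup>2 * poly (rodrigues_poly A (m + 2) m) (x\<^sup>2)"
    unfolding A_def by (rule jacobiP_eq_rodrigues_poly)
  moreover have "0 < (real m + 1) * (real m + 2)" by simp
  ultimately have "jacobiP (m + 2) (real d / 2) (-2) (1 - 2 * x\<^sup>2)
      = (A + 1) * (A + 2) / ((real m + 1) * (real m + 2)) * (1 - x\<^sup>2)\<^sup>2 * poly (rodrigues_poly A (m + 2) m) (x\<^sup>2)"
    by (simp add: field_simps)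
  then show "PB d q x = K * ((A + 1) * (A + 2) / ((real m + 1) * (real m + 2))) * (1 - x\<^sup>2)\<^sup>2
      * poly (rodrigues_poly (real m + real d / 2) (m + 2) m) (x\<^sup>2)"
    unfolding PB_def n K_def[symmetric] A_def[symmetric] by (simp only: mult.assoc)
qed

lemma prod_square_minus_coeff_sign:
  fixes P :: "real \<Rightarrow> real"
  assumes "\<And>x. P x = a0 * (\<Prod>i<n. x\<^sup>2 - \<rho> i)" "\<And>i. i < n \<Longrightarrow> 0 < \<rho> i" "0 < P 0"
  shows "0 < (-1) ^ n * a0"
proof -
  have "(\<Prod>i<n. 0\<^sup>2 - \<rho> i) = (\<Prod>i<n. - 1 * \<rho> i)" by simp
  also have "\<dots> = (-1) ^ n * (\<Prod>i<n. \<rho> i)" by (simp only: prod.distrib prod_constant card_lessThan)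
  finally have "P 0 = (-1) ^ n * a0 * (\<Prod>i<n. \<rho> i)"
    using assms(1)[of 0] by simp
  moreover have "0 < (\<Prod>i<n. \<rho> i)" using assms(2) by (intro prod_pos) auto
  ultimately show ?thesis using \<open>0 < P 0\<close> by (simp add: zero_less_mult_iff)
qed

lemma PB_factorization:
  assumes "q \<ge> 2"
  defines "m \<equiv> q div 2 - 1"
  obtains a0 \<rho> where "\<And>x. PB d q x = a0 * (\<Prod>i<m + 2. x\<^sup>2 - \<rho> i)"
    "\<And>i. i < m + 2 \<Longrightarrow> 0 < \<rho> i" "\<And>i. i < m \<Longrightarrow> \<rho> i < \<rho> (Suc i)" "\<rho> m = 1" "\<rho> (Suc m) = 1"
    "0 < (-1) ^ m * a0"
proof -
  let ?p = "rodrigues_poly (real m + real d / 2) (m + 2) m"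
  obtain c where c: "\<And>x. PB d q x = c * (1 - x\<^sup>2)\<^sup>2 * poly ?p (x\<^sup>2)"
    using PB_eq_rodrigues_poly[OF assms(1)] unfolding m_def by metis
  obtain z where z_roots: "\<forall>i<m. 0 < z i \<and> z i < 1 \<and> poly ?p (z i) = 0"
    and z_incr: "\<forall>i. Suc i < m \<longrightarrow> z i < z (Suc i)"
    using rodrigues_poly_roots[of m "m + 2" "real m + real d / 2"] by auto
  have "inj_on z {..<m}"
    using z_incr by (intro strict_mono_on_imp_inj_on strict_mono_on_lessThanI) auto
  then have p_eq: "poly ?p u = coeff ?p m * (\<Prod>i<m. u - z i)" for u
    using z_roots by (intro poly_eq_coeff_prod_roots degree_rodrigues_poly) auto
  define \<rho> where "\<rho> i = (if i < m then z i else 1)" for i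
  have PB_prod: "PB d q x = c * coeff ?p m * (\<Prod>i<m + 2. x\<^sup>2 - \<rho> i)" for x
  proof -
    have "(\<Prod>i<m + 2. x\<^sup>2 - \<rho> i) = (\<Prod>i<m. x\<^sup>2 - z i) * (1 - x\<^sup>2)\<^sup>2"
      by (simp add: \<rho>_def power2_eq_square algebra_simps)
    then show ?thesis unfolding c p_eq by (simp add: algebra_simps)
  qed
  have \<rho>_pos: "\<And>i. i < m + 2 \<Longrightarrow> 0 < \<rho> i"
    using z_roots by (simp add: \<rho>_def)
  have "0 < (-1) ^ (m + 2) * (c * coeff ?p m)"
    using prod_square_minus_coeff_sign[OF PB_prod \<rho>_pos PB_at_0_pos] assms(1) by simp
  then show ?thesis
  proof (intro that[OF PB_prod \<rho>_pos])
    show "\<And>i. i < m \<Longrightarrow> \<rho> i < \<rho> (Suc i)"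
      using z_roots z_incr by (simp add: \<rho>_def)
  qed (simp_all add: \<rho>_def)
qed

section \<open>The radial part \<open>R\<^sup>B\<close>\<close>

text \<open>\<open>(u\<^bsup>\<alpha>\<^esup> G(u))' = u\<^bsup>\<alpha>-1\<^esup> \<cdot> euler_op \<alpha> G (u)\<close>.\<close>

definition euler_op :: "real \<Rightarrow> real poly \<Rightarrow> real poly" where
  "euler_op \<alpha> G = smult \<alpha> G + [:0, 1:] * pderiv G"

lemma coeff_euler_op: "coeff (euler_op \<alpha> G) n = (\<alpha> + real n) * coeff G n"
  unfolding euler_op_def by (cases n) (simp_all add: coeff_pderiv algebra_simps)

lemma degree_euler_op: "degree (euler_op \<alpha> G) \<le> degree G"
  by (rule degree_le) (simp add: coeff_euler_op coeff_eq_0)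

lemma radial_laplacian_poly_of_square:
  fixes F :: "real poly"
  assumes "x \<noteq> 0"
  shows "(c - 1) * deriv (\<lambda>x. poly F (x\<^sup>2)) x / x + (deriv ^^ 2) (\<lambda>x. poly F (x\<^sup>2)) x
    = 4 * poly (euler_op (c / 2) (pderiv F)) (x\<^sup>2)"
proof -
  have sq: "((\<lambda>x. x\<^sup>2) has_real_derivative 2 * y) (at y)" for y :: real
    by (auto intro!: derivative_eq_intros)
  have d1: "deriv (\<lambda>x. poly F (x\<^sup>2)) = (\<lambda>y. poly (pderiv F) (y\<^sup>2) * (2 * y))"
    by (rule ext, rule DERIV_imp_deriv, rule DERIV_chain2[OF poly_DERIV sq])
  have "((\<lambda>y. poly (pderiv F) (y\<^sup>2) * (2 * y)) has_real_derivative
      poly (pderiv (pderiv F)) (x\<^sup>2) * (2 * x) * (2 * x) + poly (pderiv F) (x\<^sup>2) * 2) (at x)"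
    by (intro derivative_eq_intros DERIV_chain2[OF poly_DERIV sq]) auto
  then have "deriv (deriv (\<lambda>x. poly F (x\<^sup>2))) x
      = poly (pderiv (pderiv F)) (x\<^sup>2) * (2 * x) * (2 * x) + poly (pderiv F) (x\<^sup>2) * 2"
    unfolding d1 by (rule DERIV_imp_deriv)
  moreover have "(deriv ^^ 2) (\<lambda>x. poly F (x\<^sup>2)) = deriv (deriv (\<lambda>x. poly F (x\<^sup>2)))"
    by (simp add: numeral_2_eq_2)
  ultimately have d2: "(deriv ^^ 2) (\<lambda>x. poly F (x\<^sup>2)) x
      = poly (pderiv (pderiv F)) (x\<^sup>2) * (2 * x) * (2 * x) + poly (pderiv F) (x\<^sup>2) * 2"
    by simp
  show ?thesis
    unfolding d1 d2 euler_op_def using assms by (simp add: field_simps power2_eq_square)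
qed

lemma euler_op_roots:
  fixes G :: "real poly" and \<sigma> :: "nat \<Rightarrow> real"
  assumes "0 < \<alpha>" "0 < \<sigma> 0"
    and \<sigma>_incr: "\<And>i. i < n \<Longrightarrow> \<sigma> i < \<sigma> (Suc i)"
    and \<sigma>_roots: "\<And>i. i \<le> n \<Longrightarrow> poly G (\<sigma> i) = 0"
  obtains \<tau> where "\<And>i. i \<le> n \<Longrightarrow> 0 < \<tau> i \<and> \<tau> i < \<sigma> n \<and> poly (euler_op \<alpha> G) (\<tau> i) = 0"
    "\<And>i. i < n \<Longrightarrow> \<tau> i < \<tau> (Suc i)"
proof -
  have \<sigma>_mono: "\<sigma> i \<le> \<sigma> j" if "i \<le> j" "j \<le> n" for i j
    using strict_mono_on_lessThanI[of "Suc n" \<sigma>] \<sigma>_incr that by (auto intro: strict_mono_on_leD)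
  define w where "w i = (if i = 0 then 0 else \<sigma> (i - 1))" for i
  define h where "h u = u powr \<alpha> * poly G u" for u
  obtain \<tau> where \<tau>: "\<And>i. i < Suc n \<Longrightarrow>
      w i < \<tau> i \<and> \<tau> i < w (Suc i) \<and> \<tau> i powr (\<alpha> - 1) * poly (euler_op \<alpha> G) (\<tau> i) = 0"
  proof (rule Rolle_interlacing[where n = "Suc n" and w = w and f = h and a = 0 and b = "\<sigma> n"])
    show "w i < w (Suc i)" if "i < Suc n" for i
      using that \<open>0 < \<sigma> 0\<close> \<sigma>_incr[of "i - 1"] by (auto simp: w_def)
    show "h (w i) = 0" if "i \<le> Suc n" for i
      using that \<sigma>_roots[of "i - 1"] by (auto simp: w_def h_def)
    show "w i \<in> {0..\<sigma> n}" if "i \<le> Suc n" for i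
    proof -
      have "i - 1 \<le> n" using that by simp
      then show ?thesis
        using \<open>0 < \<sigma> 0\<close> \<sigma>_mono[of 0 "i - 1"] \<sigma>_mono[of "i - 1" n] by (auto simp: w_def)
    qed
    show "continuous_on {0..\<sigma> n} h"
      unfolding h_def using \<open>0 < \<alpha>\<close> by (intro continuous_intros continuous_on_powr') auto
    show "(h has_real_derivative x powr (\<alpha> - 1) * poly (euler_op \<alpha> G) x) (at x)"
      if "x \<in> {0<..<\<sigma> n}" for x
    proof -
      have "x powr \<alpha> = x powr (\<alpha> - 1) * x"
        using that by (simp add: powr_diff)
      moreover have "(h has_real_derivative \<alpha> * x powr (\<alpha> - 1) * poly G x + x powr \<alpha> * poly (pderiv G) x) (at x)"
        unfolding h_def[abs_def] using that by (auto intro!: derivative_eq_intros)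
      ultimately show ?thesis unfolding euler_op_def by (simp add: algebra_simps)
    qed
  qed (use that in auto)
  show ?thesis
  proof
    show "0 < \<tau> i \<and> \<tau> i < \<sigma> n \<and> poly (euler_op \<alpha> G) (\<tau> i) = 0" if "i \<le> n" for i
    proof -
      have "i - 1 \<le> n" using that by simp
      then have "0 \<le> w i" "w (Suc i) \<le> \<sigma> n"
        using that \<open>0 < \<sigma> 0\<close> \<sigma>_mono[of 0 "i - 1"] \<sigma>_mono[of i n] by (auto simp: w_def)
      then show ?thesis using \<tau>[of i] that by auto
    qed
    show "\<tau> i < \<tau> (Suc i)" if "i < n" for i
      using \<tau>[of i] \<tau>[of "Suc i"] that by force
  qed
qed

lemma pderiv_prod_linear_roots:
  fixes \<rho> :: "nat \<Rightarrow> real"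
  assumes \<rho>_incr: "\<And>i. i < m \<Longrightarrow> \<rho> i < \<rho> (Suc i)" and double: "\<rho> (Suc m) = \<rho> m"
  obtains \<sigma> where "\<rho> 0 \<le> \<sigma> 0" "\<And>i. i < m \<Longrightarrow> \<sigma> i < \<sigma> (Suc i)" "\<sigma> m = \<rho> m"
    "\<And>i. i \<le> m \<Longrightarrow> poly (pderiv (\<Prod>i<m + 2. [:- \<rho> i, 1:])) (\<sigma> i) = 0"
proof -
  let ?P = "\<Prod>i<m + 2. [:- \<rho> i, 1:]"
  have \<rho>_mono: "\<rho> i \<le> \<rho> j" if "i \<le> j" "j \<le> m" for i j
    using strict_mono_on_lessThanI[of "Suc m" \<rho>] \<rho>_incr that by (auto intro: strict_mono_on_leD)
  obtain y where y: "\<And>i. i < m \<Longrightarrow> \<rho> i < y i \<and> y i < \<rho> (Suc i) \<and> poly (pderiv ?P) (y i) = 0"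
  proof (rule Rolle_interlacing[where n = m and w = \<rho> and f = "poly ?P" and f' = "poly (pderiv ?P)"
        and a = "\<rho> 0" and b = "\<rho> m"])
    show "poly ?P (\<rho> i) = 0" if "i \<le> m" for i
      unfolding poly_prod using that by (intro prod_zero) auto
    show "continuous_on {\<rho> 0..\<rho> m} (poly ?P)" by (intro continuous_intros)
  qed (use that \<rho>_incr \<rho>_mono in \<open>auto intro: poly_DERIV\<close>)
  define Q where "Q = (\<Prod>i<m. [:- \<rho> i, 1:])"
  define L where "L = [:- \<rho> m, 1:]"
  have "?P = Q * (L * L)"
    unfolding Q_def L_def using double by (simp only: add_2_eq_Suc' prod.lessThan_Suc mult.assoc)
  moreover have "poly L (\<rho> m) = 0" by (simp add: L_def)
  ultimately have double_root: "poly (pderiv ?P) (\<rho> m) = 0"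
    by (simp only: pderiv_mult poly_add poly_mult mult_zero_left mult_zero_right add_0)
  define \<sigma> where "\<sigma> i = (if i < m then y i else \<rho> m)" for i
  show ?thesis
  proof
    show "\<rho> 0 \<le> \<sigma> 0" using y[of 0] by (cases "m = 0") (auto simp: \<sigma>_def)
    show "\<sigma> i < \<sigma> (Suc i)" if "i < m" for i
      using that y[of i] y[of "Suc i"] by (cases "Suc i = m") (auto simp: \<sigma>_def)
    show "poly (pderiv ?P) (\<sigma> i) = 0" if "i \<le> m" for i
      using that y[of i] double_root by (auto simp: \<sigma>_def)
  qed (simp add: \<sigma>_def)
qed

lemma RB_factorization:
  assumes "d \<ge> 1"
    and PB_prod: "\<And>x. PB d q x = a0 * (\<Prod>i<m + 2. x\<^sup>2 - \<rho> i)"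
    and "0 < \<rho> 0" "\<And>i. i < m \<Longrightarrow> \<rho> i < \<rho> (Suc i)" "\<rho> m = 1" "\<rho> (Suc m) = 1"
  obtains \<tau> where "\<And>i. i < m + 1 \<Longrightarrow> 0 < \<tau> i \<and> \<tau> i < 1"
    "\<And>x. x \<noteq> 0 \<Longrightarrow> RB d q x = 4 * real (m + 2) * (real d / 2 + real m + 1) * a0 * (\<Prod>i<m + 1. x\<^sup>2 - \<tau> i)"
proof -
  define F where "F = smult a0 (\<Prod>i<m + 2. [:- \<rho> i, 1:])"
  define G where "G = euler_op (real d / 2) (pderiv F)"
  have "poly F u = a0 * (\<Prod>i<m + 2. u - \<rho> i)" for u
    unfolding F_def poly_smult poly_prod by (simp del: prod.lessThan_Suc)
  then have "PB d q = (\<lambda>x. poly F (x\<^sup>2))"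
    using PB_prod by auto
  then have RB_eq: "RB d q x = 4 * poly G (x\<^sup>2)" if "x \<noteq> 0" for x
    unfolding RB_def G_def using radial_laplacian_poly_of_square[OF that] by simp
  have "\<rho> (Suc m) = \<rho> m" using assms(5,6) by simp
  then obtain \<sigma> where \<sigma>: "\<rho> 0 \<le> \<sigma> 0" "\<And>i. i < m \<Longrightarrow> \<sigma> i < \<sigma> (Suc i)" "\<sigma> m = \<rho> m"
    "\<And>i. i \<le> m \<Longrightarrow> poly (pderiv (\<Prod>i<m + 2. [:- \<rho> i, 1:])) (\<sigma> i) = 0"
    using pderiv_prod_linear_roots[of m \<rho>, OF assms(4)] by blast
  have "0 < real d / 2" using \<open>d \<ge> 1\<close> by simp
  moreover have "0 < \<sigma> 0" using \<sigma>(1) \<open>0 < \<rho> 0\<close> by simp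
  moreover have "\<And>i. i \<le> m \<Longrightarrow> poly (pderiv F) (\<sigma> i) = 0"
    using \<sigma>(4) by (simp add: F_def pderiv_smult)
  ultimately obtain \<tau> where \<tau>: "\<And>i. i \<le> m \<Longrightarrow> 0 < \<tau> i \<and> \<tau> i < \<sigma> m \<and> poly G (\<tau> i) = 0"
    "\<And>i. i < m \<Longrightarrow> \<tau> i < \<tau> (Suc i)"
    using euler_op_roots[where \<alpha> = "real d / 2" and \<sigma> = \<sigma> and n = m and G = "pderiv F"] \<sigma>(2) unfolding G_def by blast
  have "inj_on \<tau> {..<m + 1}"
    using \<tau>(2) by (intro strict_mono_on_imp_inj_on strict_mono_on_lessThanI) auto
  moreover have "degree F \<le> m + 2" "coeff F (m + 2) = a0"
    unfolding F_def using monic_linear_prod[where r = \<rho> and n = "m + 2"] by (auto intro: order.trans[OF degree_smult_le])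
  then have "degree G \<le> m + 1" "coeff G (m + 1) = real (m + 2) * (real d / 2 + real m + 1) * a0"
    unfolding G_def using degree_euler_op[of "real d / 2" "pderiv F"]
    by (auto simp: degree_pderiv coeff_euler_op coeff_pderiv algebra_simps)
  ultimately have "poly G u = real (m + 2) * (real d / 2 + real m + 1) * a0 * (\<Prod>i<m + 1. u - \<tau> i)" for u
    using \<tau>(1) poly_eq_coeff_prod_roots[of G "m + 1" \<tau> u] by auto
  then show ?thesis
    using that[of \<tau>] \<tau>(1) \<sigma>(3) \<open>\<rho> m = 1\<close> RB_eq by auto
qed

section \<open>Monotonicity beyond \<open>x = 1\<close>\<close>

lemma prod_square_minus_div_power_eq:
  fixes \<tau> :: "nat \<Rightarrow> real"
  assumes "x \<noteq> 0" "j \<le> 2 * k"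
  shows "(\<Prod>i<k. x\<^sup>2 - \<tau> i) / x ^ j = x ^ (2 * k - j) * (\<Prod>i<k. 1 - \<tau> i / x\<^sup>2)"
proof -
  have "(\<Prod>i<k. x\<^sup>2 - \<tau> i) = (\<Prod>i<k. x\<^sup>2 * (1 - \<tau> i / x\<^sup>2))"
    using assms(1) by (intro prod.cong) (simp_all add: field_simps)
  also have "\<dots> = x ^ (2 * k) * (\<Prod>i<k. 1 - \<tau> i / x\<^sup>2)"
    by (simp add: prod.distrib power_mult)
  finally show ?thesis
    using assms by (simp add: power_diff)
qed

lemma prod_square_minus_div_power_mono:
  fixes \<tau> :: "nat \<Rightarrow> real"
  assumes "\<And>i. i < k \<Longrightarrow> 0 \<le> \<tau> i \<and> \<tau> i \<le> 1" "j \<le> 2 * k"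
  shows "mono_on {1<..} (\<lambda>x. (\<Prod>i<k. x\<^sup>2 - \<tau> i) / x ^ j)"
    and "\<And>x. 1 < x \<Longrightarrow> 0 < (\<Prod>i<k. x\<^sup>2 - \<tau> i) / x ^ j"
proof -
  have factor_pos: "0 < 1 - \<tau> i / x\<^sup>2" if "1 < x" "i < k" for i x
  proof -
    have "1 < x\<^sup>2" using that(1) by (simp add: one_less_power)
    then have "\<tau> i < x\<^sup>2" using assms(1)[OF that(2)] by linarith
    then show ?thesis using that(1) by (simp add: field_simps)
  qed
  show "mono_on {1<..} (\<lambda>x. (\<Prod>i<k. x\<^sup>2 - \<tau> i) / x ^ j)"
  proof (rule mono_onI)
    fix x y :: real assume "x \<in> {1<..}" "y \<in> {1<..}" "x \<le> y"
    then have xy: "1 < x" "1 < y" "x \<le> y" by auto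
    have "(\<Prod>i<k. 1 - \<tau> i / x\<^sup>2) \<le> (\<Prod>i<k. 1 - \<tau> i / y\<^sup>2)"
    proof (rule prod_mono)
      fix i assume "i \<in> {..<k}"
      then have "\<tau> i / y\<^sup>2 \<le> \<tau> i / x\<^sup>2"
        using assms(1) xy by (intro divide_left_mono power_mono mult_pos_pos) auto
      then show "0 \<le> 1 - \<tau> i / x\<^sup>2 \<and> 1 - \<tau> i / x\<^sup>2 \<le> 1 - \<tau> i / y\<^sup>2"
        using factor_pos[OF xy(1)] \<open>i \<in> {..<k}\<close> by (auto simp: less_imp_le)
    qed
    moreover have "x ^ (2 * k - j) \<le> y ^ (2 * k - j)" using xy by (intro power_mono) auto
    ultimately have "x ^ (2 * k - j) * (\<Prod>i<k. 1 - \<tau> i / x\<^sup>2) \<le> y ^ (2 * k - j) * (\<Prod>i<k. 1 - \<tau> i / y\<^sup>2)"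
      using xy factor_pos by (intro mult_mono prod_nonneg) (auto simp: less_imp_le)
    then show "(\<Prod>i<k. x\<^sup>2 - \<tau> i) / x ^ j \<le> (\<Prod>i<k. y\<^sup>2 - \<tau> i) / y ^ j"
      using xy assms(2) by (simp add: prod_square_minus_div_power_eq)
  qed
  show "0 < (\<Prod>i<k. x\<^sup>2 - \<tau> i) / x ^ j" if "1 < x" for x
  proof -
    have "0 < (\<Prod>i<k. 1 - \<tau> i / x\<^sup>2)" using factor_pos[OF that] by (intro prod_pos) auto
    then show ?thesis using that assms(2) by (simp add: prod_square_minus_div_power_eq)
  qed
qed

lemma mono_on_scaled_by_sign:
  fixes f g :: "real \<Rightarrow> real"
  assumes "\<And>x. x \<in> S \<Longrightarrow> f x = c * g x" "mono_on S g" "\<And>x. x \<in> S \<Longrightarrow> 0 < g x"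
  shows "0 < c \<Longrightarrow> mono_on S f \<and> (\<forall>x\<in>S. 0 < f x)"
    and "c < 0 \<Longrightarrow> antimono_on S f \<and> (\<forall>x\<in>S. f x < 0)"
  using assms by (auto simp: monotone_on_def mult_left_mono mult_left_mono_neg mult_neg_pos)

lemma scaled_prod_square_minus_div_power_mono:
  fixes f :: "real \<Rightarrow> real" and \<tau> :: "nat \<Rightarrow> real"
  assumes "\<And>x. 1 < x \<Longrightarrow> f x = c * (\<Prod>i<k. x\<^sup>2 - \<tau> i)"
    "\<And>i. i < k \<Longrightarrow> 0 \<le> \<tau> i \<and> \<tau> i \<le> 1" "j \<le> 2 * k"
  shows "0 < c \<Longrightarrow> mono_on {1<..} (\<lambda>x. f x / x ^ j) \<and> (\<forall>x>1. f x / x ^ j > 0)"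
    and "c < 0 \<Longrightarrow> antimono_on {1<..} (\<lambda>x. f x / x ^ j) \<and> (\<forall>x>1. f x / x ^ j < 0)"
proof -
  have "f x / x ^ j = c * ((\<Prod>i<k. x\<^sup>2 - \<tau> i) / x ^ j)" if "x \<in> {1<..}" for x
    using assms(1) that by simp
  note scaled = mono_on_scaled_by_sign[OF this prod_square_minus_div_power_mono(1)[OF assms(2,3)]]
  show "0 < c \<Longrightarrow> mono_on {1<..} (\<lambda>x. f x / x ^ j) \<and> (\<forall>x>1. f x / x ^ j > 0)"
    using scaled(1) prod_square_minus_div_power_mono(2)[OF assms(2,3)] by auto
  show "c < 0 \<Longrightarrow> antimono_on {1<..} (\<lambda>x. f x / x ^ j) \<and> (\<forall>x>1. f x / x ^ j < 0)"
    using scaled(2) prod_square_minus_div_power_mono(2)[OF assms(2,3)] by auto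
qed

lemma sqrt_shifted_roots:
  fixes \<rho> :: "nat \<Rightarrow> real"
  assumes "\<And>i. i < m + 2 \<Longrightarrow> 0 < \<rho> i" "\<And>i. i < m \<Longrightarrow> \<rho> i < \<rho> (Suc i)" "\<rho> m = 1" "\<rho> (Suc m) = 1"
  shows "(\<Prod>i=1..m + 2. x\<^sup>2 - (sqrt (\<rho> (i - 1)))\<^sup>2) = (\<Prod>i<m + 2. x\<^sup>2 - \<rho> i)"
    and "0 < sqrt (\<rho> 0)" "\<And>i. 1 \<le> i \<Longrightarrow> i < m + 1 \<Longrightarrow> sqrt (\<rho> (i - 1)) < sqrt (\<rho> i)"
    and "sqrt (\<rho> m) = 1" "sqrt (\<rho> (m + 1)) = 1"
proof -
  show "(\<Prod>i=1..m + 2. x\<^sup>2 - (sqrt (\<rho> (i - 1)))\<^sup>2) = (\<Prod>i<m + 2. x\<^sup>2 - \<rho> i)"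
    unfolding One_nat_def prod.atLeast1_atMost_eq using assms(1)
    by (intro prod.cong) (auto simp: less_imp_le)
  show "sqrt (\<rho> (i - 1)) < sqrt (\<rho> i)" if "1 \<le> i" "i < m + 1" for i
    using that assms(2)[of "i - 1"] assms(3) by (cases "i = m") auto
qed (use assms(1)[of 0] assms(3,4) in simp_all)

theorem lemmaB6:
  fixes d q :: nat
  assumes "d \<ge> 1" and "q \<ge> 2" and "even q"
  shows "(\<exists>(a0::real) (a::nat \<Rightarrow> real).
            (\<forall>x. PB d q x = a0 * (\<Prod>i=1..q div 2 + 1. x\<^sup>2 - (a i)\<^sup>2)) \<and>
            (q mod 4 = 2 \<longrightarrow> a0 > 0) \<and> (q mod 4 = 0 \<longrightarrow> a0 < 0) \<and>
            0 < a 1 \<and> (\<forall>i. 1 \<le> i \<and> i < q div 2 \<longrightarrow> a i < a (i + 1)) \<and>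
            a (q div 2) = 1 \<and> a (q div 2 + 1) = 1) \<and>
         (\<forall>j \<le> q - 2.
            (q mod 4 = 2 \<longrightarrow>
               mono_on {1<..} (\<lambda>x. RB d q x / x ^ j) \<and> (\<forall>x>1. RB d q x / x ^ j > 0)) \<and>
            (q mod 4 = 0 \<longrightarrow>
               antimono_on {1<..} (\<lambda>x. RB d q x / x ^ j) \<and> (\<forall>x>1. RB d q x / x ^ j < 0)))"
proof -
  define m where "m = q div 2 - 1"
  have q: "q div 2 + 1 = m + 2" "q div 2 = m + 1" "q - 2 = 2 * m"
    and parity: "q mod 4 = 2 \<longleftrightarrow> even m" "q mod 4 = 0 \<longleftrightarrow> odd m"
    using assms(2,3) unfolding m_def by presburger+
  obtain a0 \<rho> where PB_prod: "\<And>x. PB d q x = a0 * (\<Prod>i<m + 2. x\<^sup>2 - \<rho> i)"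
    and \<rho>: "\<And>i. i < m + 2 \<Longrightarrow> 0 < \<rho> i" "\<And>i. i < m \<Longrightarrow> \<rho> i < \<rho> (Suc i)" "\<rho> m = 1" "\<rho> (Suc m) = 1"
    and "0 < (-1) ^ m * a0"
    using PB_factorization[OF assms(2), folded m_def] by metis
  then have a0_sign: "q mod 4 = 2 \<Longrightarrow> 0 < a0" "q mod 4 = 0 \<Longrightarrow> a0 < 0"
    using parity by (simp_all add: zero_less_mult_iff)
  define C where "C = 4 * real (m + 2) * (real d / 2 + real m + 1) * a0"
  obtain \<tau> where \<tau>: "\<And>i. i < m + 1 \<Longrightarrow> 0 < \<tau> i \<and> \<tau> i < 1"
    and RB_prod: "\<And>x. x \<noteq> 0 \<Longrightarrow> RB d q x = C * (\<Prod>i<m + 1. x\<^sup>2 - \<tau> i)"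
    using RB_factorization[OF assms(1) PB_prod _ \<rho>(2-4)] \<rho>(1)[of 0] unfolding C_def by auto
  have C_sign: "q mod 4 = 2 \<Longrightarrow> 0 < C" "q mod 4 = 0 \<Longrightarrow> C < 0"
    using a0_sign by (simp_all add: C_def mult_pos_neg)
  have RB_sign: "q mod 4 = 2 \<Longrightarrow> mono_on {1<..} (\<lambda>x. RB d q x / x ^ j) \<and> (\<forall>x>1. RB d q x / x ^ j > 0)"
    "q mod 4 = 0 \<Longrightarrow> antimono_on {1<..} (\<lambda>x. RB d q x / x ^ j) \<and> (\<forall>x>1. RB d q x / x ^ j < 0)"
    if "j \<le> q - 2" for j
    using scaled_prod_square_minus_div_power_mono[where f = "RB d q" and c = C and k = "m + 1" and \<tau> = \<tau> and j = j]
      RB_prod \<tau> that q(3) C_sign by (simp_all add: less_imp_le)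
  note sqrt_roots = sqrt_shifted_roots[where \<rho> = \<rho> and m = m]
  have PB_sqrt: "PB d q x = a0 * (\<Prod>i=1..m + 2. x\<^sup>2 - (sqrt (\<rho> (i - 1)))\<^sup>2)" for x
    using \<rho> by (subst sqrt_roots(1)) (simp_all add: PB_prod)
  show ?thesis
    using PB_sqrt RB_sign sqrt_roots(2-5) \<rho> a0_sign unfolding q
    by (intro conjI exI[of _ a0] exI[of _ "\<lambda>i. sqrt (\<rho> (i - 1))"]) auto
qed

end
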